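(* Let $a<b$, let $\mu$ be a Steffensen–Popoviciu measure on $[a,b]$ with barycenter $b_\mu=\frac{1}{\mu([a,b])}\int_a^b x\,d\mu(x)$, and let $f:[a,b]\to\mathbb{R}$ be a left almost convex function, with $c<d$ interior points of $[a,b]$ as in the definition of left almost convexity (so $f|_{[c,b]}$ is convex and $f\ge h$ on $[a,c]$, where $h$ is the affine function with $h(c)=f(c)$, $h(d)=f(d)$). Suppose that (i) $b_\mu\ge c$; and (ii) $\displaystyle\int_a^d\Big(\big(f(x)-f(c)\big)(d-c)-\big(f(d)-f(c)\big)(x-c)\Big)\,d\mu(x)\ge0.$ Then \[ f(b_\mu)\le\frac{1}{\mu([a,b])}\int_a^b f(x)\,d\mu(x). \]
   Context: A Steffensen–Popoviciu measure on a compact interval $[a,b]$ is a real (signed, finite) Borel measure $\mu$ on $[a,b]$ with $\mu([a,b])>0$ such that $\int_{[a,b]} g(x)\,d\mu(x)\ge0$ for every continuous convex function $g:[a,b]\to[0,\infty)$. Its barycenter is $b_\mu=\frac{1}{\mu([a,b])}\int_a^b x\,d\mu(x)$. A real-valued function $f$ defined on an interval $I$ is called left almost convex if it is integrable and there is a pair of interior points $c<d$ of $I$ such that: (i) $f|_{[c,\infty)\cap I}$ is convex; and (ii) $f\ge h$ on $(-\infty,c]\cap I$, where $h$ is the affine function joining the points $(c,f(c))$ and $(d,f(d))$. Here "integrable" is understood as integrable with respect to the total variation $|\mu|$ of the measure under consideration, so that all integrals in the statement exist. *)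

theory Defs
  imports "HOL-Analysis.Analysis"
begin

text \<open>A finite signed Borel measure on [a,b] is represented by its Jordan decomposition
  mu = P - N: two finite Borel measures on the reals, both concentrated on [a,b],
  mutually singular. Then the total variation is |mu| = P + N.\<close>

definition signed_jordan :: "real \<Rightarrow> real \<Rightarrow> real measure \<Rightarrow> real measure \<Rightarrow> bool" where
  "signed_jordan a b P N \<longleftrightarrow>
     finite_measure P \<and> finite_measure N \<and>
     sets P = sets borel \<and> sets N = sets borel \<and>
     emeasure P (UNIV - {a..b}) = 0 \<and> emeasure N (UNIV - {a..b}) = 0 \<and>
     (\<exists>A \<in> sets borel. emeasure P A = 0 \<and> emeasure N (UNIV - A) = 0)"

definition sint :: "real measure \<Rightarrow> real measure \<Rightarrow> real set \<Rightarrow> (real \<Rightarrow> real) \<Rightarrow> real" where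
  "sint P N S g = (LINT x:S|P. g x) - (LINT x:S|N. g x)"

definition smass :: "real \<Rightarrow> real \<Rightarrow> real measure \<Rightarrow> real measure \<Rightarrow> real" where
  "smass a b P N = measure P {a..b} - measure N {a..b}"

definition SP_measure :: "real \<Rightarrow> real \<Rightarrow> real measure \<Rightarrow> real measure \<Rightarrow> bool" where
  "SP_measure a b P N \<longleftrightarrow> signed_jordan a b P N \<and> smass a b P N > 0 \<and>
     (\<forall>g. continuous_on {a..b} g \<and> convex_on {a..b} g \<and> (\<forall>x\<in>{a..b}. g x \<ge> 0)
          \<longrightarrow> sint P N {a..b} g \<ge> 0)"

definition barycenter :: "real \<Rightarrow> real \<Rightarrow> real measure \<Rightarrow> real measure \<Rightarrow> real" where
  "barycenter a b P N = sint P N {a..b} (\<lambda>x. x) / smass a b P N"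

definition left_almost_convex ::
  "real \<Rightarrow> real \<Rightarrow> real measure \<Rightarrow> real measure \<Rightarrow> (real \<Rightarrow> real) \<Rightarrow> real \<Rightarrow> real \<Rightarrow> bool" where
  "left_almost_convex a b P N f c d \<longleftrightarrow>
     set_integrable P {a..b} f \<and> set_integrable N {a..b} f \<and>
     a < c \<and> c < d \<and> d < b \<and>
     convex_on {c..b} f \<and>
     (\<forall>x\<in>{a..c}. f x \<ge> f c + (f d - f c) / (d - c) * (x - c))"

end

theory Submission
  imports Defs "HOL-Probability.Distribution_Functions"
begin

text \<open>Replace \<open>f\<close> left of \<open>d\<close> by the chord \<open>h\<close> through \<open>(c, f c)\<close> and \<open>(d, f d)\<close>.
  As \<open>h\<close> supports \<open>f\<close> on \<open>[d, b]\<close>, the resulting function \<open>\<phi>\<close> is convex on \<open>[a, b]\<close>; it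
  agrees with \<open>f\<close> on \<open>(d, b]\<close> and dominates it on \<open>[c, d]\<close>, so \<open>f b\<^sub>\<mu> \<le> \<phi> b\<^sub>\<mu>\<close> as \<open>b\<^sub>\<mu> \<ge> c\<close>.
  Jensen's inequality for Steffensen--Popoviciu measures gives \<open>\<phi> b\<^sub>\<mu> \<cdot> \<mu>[a, b] \<le> \<integral> \<phi> d\<mu>\<close>, and
  \<open>(d - c) \<integral> (f - \<phi>) d\<mu>\<close> is exactly the integral of hypothesis (ii).

  Jensen's inequality has to allow a jump of \<open>\<phi>\<close> at \<open>b\<close>. For \<open>r < b\<^sub>\<mu>\<close> let \<open>L\<close> be the secant of
  \<open>\<phi>\<close> through \<open>r\<close> and \<open>b\<^sub>\<mu>\<close> (if \<open>b\<^sub>\<mu> = b\<close> there need not be a finite supporting line): the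
  positive part of \<open>\<phi> - L\<close> is convex and nonnegative, hence has nonnegative integral, while its
  negative part is bounded and vanishes off \<open>(r, b\<^sub>\<mu>)\<close>, whose mass tends to \<open>0\<close> as \<open>r \<rightarrow> b\<^sub>\<mu>\<close>.
  The same device extends the defining inequality of SP measures from continuous convex functions
  to convex functions continuous on \<open>[a, b)\<close>.\<close>

section \<open>Convex functions of a real variable\<close>

lemma convex_on_affine: "convex S \<Longrightarrow> convex_on S (\<lambda>x::real. \<alpha> + \<beta> * (x - \<gamma>))"
  by (rule convex_onI) (simp add: algebra_simps)

definition secant :: "(real \<Rightarrow> real) \<Rightarrow> real \<Rightarrow> real \<Rightarrow> real \<Rightarrow> real" where
  "secant g x y z = g y + (g y - g x) / (y - x) * (z - y)"

lemma secant_right [simp]: "secant g x y y = g y"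
  by (simp add: secant_def)

lemma secant_left [simp]: "x \<noteq> y \<Longrightarrow> secant g x y x = g x"
  by (simp add: secant_def field_simps)

lemma convex_on_secant: "convex S \<Longrightarrow> convex_on S (secant g x y)"
  unfolding secant_def[abs_def] by (rule convex_on_affine)

lemma continuous_on_secant: "continuous_on S (secant g x y)"
  unfolding secant_def[abs_def]
  by (intro continuous_on_add continuous_on_mult_left continuous_on_diff continuous_on_const continuous_on_id)

lemma secant_le_max:
  assumes "x < y" "z \<in> {x..y}"
  shows "secant g x y z \<le> max (g x) (g y)"
  using convex_on_le_max[OF convex_on_secant[of "{x..y}" g x y] assms(2)] assms(1) by simp

lemma convex_on_max:
  fixes f g :: "'a::real_vector \<Rightarrow> real"
  assumes "convex_on S f" "convex_on S g"
  shows "convex_on S (\<lambda>x. max (f x) (g x))"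
proof (rule convex_onI)
  show "convex S" using assms(1) convex_on_imp_convex by blast
  fix t :: real and x y assume t: "0 < t" "t < 1" and xy: "x \<in> S" "y \<in> S"
  have "f ((1 - t) *\<^sub>R x + t *\<^sub>R y) \<le> (1 - t) * max (f x) (g x) + t * max (f y) (g y)"
    using convex_onD[OF assms(1), of t x y] t xy
    by (smt (verit) max.cobounded1 mult_left_mono)
  moreover have "g ((1 - t) *\<^sub>R x + t *\<^sub>R y) \<le> (1 - t) * max (f x) (g x) + t * max (f y) (g y)"
    using convex_onD[OF assms(2), of t x y] t xy
    by (smt (verit) max.cobounded2 mult_left_mono)
  ultimately show "max (f ((1 - t) *\<^sub>R x + t *\<^sub>R y)) (g ((1 - t) *\<^sub>R x + t *\<^sub>R y))
      \<le> (1 - t) * max (f x) (g x) + t * max (f y) (g y)" by simp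
qed

lemma convex_on_le_secant:
  fixes g :: "real \<Rightarrow> real"
  assumes "convex_on I g" "x \<in> I" "y \<in> I" "z \<in> {x..y}"
  shows "g z \<le> secant g x y z"
proof -
  have "is_interval I"
    unfolding is_interval_convex_1 by (rule convex_on_imp_convex[OF assms(1)])
  then have "{x..y} \<subseteq> I"
    by (intro subsetI mem_is_interval_1_I[OF _ assms(2,3)]) auto
  then have "g z \<le> (g x - g y) / (y - x) * (y - z) + g y"
    using assms by (intro convex_onD_Icc'' convex_on_subset[OF assms(1)]) auto
  also have "(g x - g y) / (y - x) * (y - z) = (g y - g x) / (y - x) * (z - y)"
    by (metis minus_diff_eq minus_divide_left minus_mult_minus)
  finally show ?thesis by (simp add: secant_def)
qed

lemma convex_on_secant_le:
  fixes g :: "real \<Rightarrow> real"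
  assumes g: "convex_on I g" and I: "x \<in> I" "y \<in> I" "z \<in> I" and xy: "x < y" and z: "z \<notin> {x<..<y}"
  shows "secant g x y z \<le> g z"
proof -
  define s where "s = (g y - g x) / (y - x)"
  have s': "(g x - g y) / (x - y) = s"
    unfolding s_def by (metis minus_diff_eq minus_divide_divide)
  consider "z < x" | "z = x" | "z = y" | "y < z" using z by force
  then have "s * (z - y) \<le> g z - g y"
  proof cases
    case 1
    have "(g z - g y) / (z - y) \<le> s"
      using convex_on_slope_le(2)[OF g I(3) I(2) 1 xy] s' by simp
    then show ?thesis using 1 xy by (simp add: neg_divide_le_eq)
  next
    case 4
    have "s \<le> (g y - g z) / (y - z)"
      using convex_on_slope_le[OF g I(1) I(3) xy 4] s' by linarith
    then show ?thesis using 4 by (metis minus_diff_eq minus_divide_divide pos_le_divide_eq diff_gt_0_iff_gt)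
  next
    case 2
    have "s * (y - x) = g y - g x" using xy by (simp add: s_def)
    then show ?thesis using 2 by (simp add: algebra_simps)
  qed simp
  then show ?thesis by (simp add: secant_def s_def)
qed

lemma convex_on_Icc_lower_bound:
  fixes \<phi> :: "real \<Rightarrow> real"
  assumes \<phi>: "convex_on {a..b} \<phi>" and x: "x \<in> {a..b}"
  shows "2 * \<phi> ((a + b) / 2) - max (\<phi> a) (\<phi> b) \<le> \<phi> x"
proof -
  have x': "a + b - x \<in> {a..b}" using x by auto
  have mid: "(1 - 1/2) *\<^sub>R x + (1/2) *\<^sub>R (a + b - x) = (a + b) / 2" by (simp add: field_simps)
  have "\<phi> ((1 - 1/2) *\<^sub>R x + (1/2) *\<^sub>R (a + b - x)) \<le> (1 - 1/2) * \<phi> x + (1/2) * \<phi> (a + b - x)"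
    by (rule convex_onD[OF \<phi>]) (use x x' in auto)
  then have "\<phi> ((a + b) / 2) \<le> (1 - 1/2) * \<phi> x + (1/2) * \<phi> (a + b - x)"
    unfolding mid .
  then show ?thesis using convex_on_le_max[OF \<phi> x'] by simp
qed

lemma convex_on_le_chord_from_support_line:
  fixes f :: "real \<Rightarrow> real"
  assumes f: "convex_on {t..y} f" and above: "f t + s * (y - t) \<le> f y"
    and u: "0 < u" "u < 1" and x: "x < t" and z: "t < (1 - u) * x + u * y"
  shows "f ((1 - u) * x + u * y) \<le> (1 - u) * (f t + s * (x - t)) + u * f y"
proof -
  define L where "L w = f t + s * (w - t)" for w
  define z where "z = (1 - u) * x + u * y"
  define D where "D = f y - L y"
  have D: "0 \<le> D" using above by (simp add: D_def L_def)
  have zx: "z - x = u * (y - x)" and yz: "y - z = (1 - u) * (y - x)" by (simp_all add: z_def algebra_simps)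
  have "0 < u * (y - x)" using zx x z by (simp add: z_def)
  then have "0 < y - x" using u by (simp add: zero_less_mult_iff)
  then have zy: "z < y" using yz u by (metis diff_gt_0_iff_gt mult_pos_pos)
  have "f z \<le> (f y - f t) / (y - t) * (z - t) + f t"
    by (rule convex_onD_Icc'[OF f]) (use z zy in \<open>auto simp: z_def\<close>)
  also have "\<dots> = L z + D * ((z - t) / (y - t))"
    using z zy by (simp add: D_def L_def z_def field_simps)
  also have "(z - t) / (y - t) \<le> u"
  proof -
    have "z - t + (1 - u) * (t - x) = u * (y - t)" by (simp add: z_def algebra_simps)
    moreover have "0 \<le> (1 - u) * (t - x)" using u x by simp
    ultimately show ?thesis using z zy by (simp add: divide_le_eq z_def)
  qed
  then have "D * ((z - t) / (y - t)) \<le> u * D" using mult_left_mono[OF _ D] by (metis mult.commute)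
  also have "L z + u * D = (1 - u) * L x + u * f y" by (simp add: D_def L_def z_def algebra_simps)
  finally show ?thesis by (simp add: z_def L_def)
qed

lemma convex_on_prolong_by_support_line:
  fixes f :: "real \<Rightarrow> real"
  assumes f: "convex_on {t..b} f" and support: "\<And>x. x \<in> {t..b} \<Longrightarrow> f t + s * (x - t) \<le> f x"
  shows "convex_on {a..b} (\<lambda>x. if x \<le> t then f t + s * (x - t) else f x)"
proof (rule convex_on_linorderI)
  define L where "L x = f t + s * (x - t)" for x
  fix u x y :: real assume u: "0 < u" "u < 1" and xy: "x \<in> {a..b}" "y \<in> {a..b}" "x < y"
  define z where "z = (1 - u) * x + u * y"
  have "z - x = u * (y - x)" "y - z = (1 - u) * (y - x)" by (simp_all add: z_def algebra_simps)
  then have z: "x < z" "z < y" using u xy by (metis diff_gt_0_iff_gt mult_pos_pos)+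
  have Lz: "L z = (1 - u) * L x + u * L y" by (simp add: L_def z_def algebra_simps)
  consider "y \<le> t" | "t \<le> x" | "x < t" "t < y" "z \<le> t" | "x < t" "t < z" by linarith
  then have "(if z \<le> t then L z else f z)
      \<le> (1 - u) * (if x \<le> t then L x else f x) + u * (if y \<le> t then L y else f y)"
  proof cases
    case 2
    have "L t = f t" by (simp add: L_def)
    then show ?thesis
      using convex_onD[OF f, of u x y] u xy z 2 by (auto simp: z_def)
  next
    case 3
    have "L y \<le> f y" using support[of y] xy 3 by (simp add: L_def)
    then show ?thesis using 3 Lz u by (simp add: mult_left_mono)
  next
    case 4
    have "f z \<le> (1 - u) * L x + u * f y"
      unfolding z_def L_def
      by (rule convex_on_le_chord_from_support_line[OF convex_on_subset[OF f] support])
        (use xy z 4 u in \<open>auto simp: z_def\<close>)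
    then show ?thesis using 4 z by simp
  qed (use z Lz in simp)
  then show "(\<lambda>x. if x \<le> t then f t + s * (x - t) else f x) ((1 - u) *\<^sub>R x + u *\<^sub>R y)
      \<le> (1 - u) * (\<lambda>x. if x \<le> t then f t + s * (x - t) else f x) x
        + u * (\<lambda>x. if x \<le> t then f t + s * (x - t) else f x) y"
    unfolding z_def L_def real_scaleR_def .
qed simp

section \<open>Finite Borel measures on the real line\<close>

lemma (in finite_borel_measure) measure_left_interval_tendsto_0:
  "((\<lambda>\<delta>. measure M {x - \<delta><..<x}) \<longlongrightarrow> 0) (at_right 0)"
proof -
  have "filterlim (\<lambda>\<delta>. x - \<delta>) (at_left x) (at_right 0)"
    by (rule tendsto_imp_filterlim_at_left)
      (auto intro!: tendsto_eq_intros simp: eventually_at_right_less)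
  then have "((\<lambda>\<delta>. measure M {..<x} - cdf M (x - \<delta>)) \<longlongrightarrow> measure M {..<x} - measure M {..<x}) (at_right 0)"
    by (intro tendsto_diff tendsto_const filterlim_compose[OF cdf_at_left])
  moreover have "\<forall>\<^sub>F \<delta> in at_right 0. measure M {..<x} - cdf M (x - \<delta>) = measure M {x - \<delta><..<x}"
  proof (rule eventually_mono[OF eventually_at_right_less])
    fix \<delta> :: real assume "0 < \<delta>"
    then have "{..<x} = {..x - \<delta>} \<union> {x - \<delta><..<x}" by auto
    then have "measure M {..<x} = measure M {..x - \<delta>} + measure M {x - \<delta><..<x}"
      by (metis finite_measure_Union sets_M borel_open borel_closed closed_atMost open_greaterThanLessThan
          disjoint_iff greaterThanLessThan_iff atMost_iff not_le)
    then show "measure M {..<x} - cdf M (x - \<delta>) = measure M {x - \<delta><..<x}"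
      by (simp add: cdf_def)
  qed
  ultimately show ?thesis by (simp add: tendsto_cong)
qed

lemma (in finite_borel_measure) nonneg_if_ge_neg_measure_left_intervals:
  fixes z K :: real
  assumes "a < m" and bound: "\<And>r. a \<le> r \<Longrightarrow> r < m \<Longrightarrow> - (K * measure M {r<..<m}) \<le> z"
  shows "0 \<le> z"
proof -
  have "((\<lambda>\<delta>. - (K * measure M {m - \<delta><..<m})) \<longlongrightarrow> - (K * 0)) (at_right 0)"
    by (intro tendsto_intros measure_left_interval_tendsto_0)
  moreover have "\<forall>\<^sub>F \<delta> in at_right 0. - (K * measure M {m - \<delta><..<m}) \<le> z"
    by (rule eventually_at_rightI[of _ "m - a"]) (use assms in \<open>auto intro!: bound\<close>)
  ultimately show ?thesis
    using tendsto_le[OF trivial_limit_at_right_real tendsto_const] by simp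
qed

lemma (in finite_borel_measure) set_integrable_continuous_on_Icc:
  fixes g :: "real \<Rightarrow> real"
  assumes "continuous_on {a..b} g"
  shows "set_integrable M {a..b} g"
proof -
  have "bounded (g ` {a..b})"
    by (intro compact_imp_bounded compact_continuous_image assms compact_Icc)
  then obtain B where B: "B > 0" "\<forall>y\<in>g ` {a..b}. norm y \<le> B"
    unfolding bounded_pos by blast
  have "(\<lambda>x. indicator {a..b} x *\<^sub>R g x) \<in> borel_measurable borel"
    by (rule borel_measurable_continuous_on_indicator[OF _ assms]) simp
  then have "(\<lambda>x. indicator {a..b} x *\<^sub>R g x) \<in> borel_measurable M"
    unfolding measurable_cong_sets[OF M_is_borel refl] .
  moreover have "AE x in M. norm (indicator {a..b} x *\<^sub>R g x) \<le> B"
    using B by (intro AE_I2) (auto simp: indicator_def)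
  ultimately show ?thesis
    unfolding set_integrable_def by (intro integrable_const_bound)
qed

lemma set_integrable_max:
  fixes f g :: "'a \<Rightarrow> real"
  assumes "set_integrable M A f" "set_integrable M A g"
  shows "set_integrable M A (\<lambda>x. max (f x) (g x))"
proof -
  have "integrable M (\<lambda>x. max (indicator A x *\<^sub>R f x) (indicator A x *\<^sub>R g x))"
    using assms unfolding set_integrable_def by (rule integrable_max)
  moreover have "(\<lambda>x. indicator A x *\<^sub>R max (f x) (g x))
      = (\<lambda>x. max (indicator A x *\<^sub>R f x) (indicator A x *\<^sub>R g x))"
    by (auto simp: indicator_def)
  ultimately show ?thesis
    unfolding set_integrable_def by simp
qed

lemma sint_diff:
  assumes "set_integrable P S f" "set_integrable P S g" "set_integrable N S f" "set_integrable N S g"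
  shows "sint P N S (\<lambda>x. f x - g x) = sint P N S f - sint P N S g"
  using set_integral_diff(2)[OF assms(1,2)] set_integral_diff(2)[OF assms(3,4)]
  by (simp add: sint_def)

lemma sint_add:
  assumes "set_integrable P S f" "set_integrable P S g" "set_integrable N S f" "set_integrable N S g"
  shows "sint P N S (\<lambda>x. f x + g x) = sint P N S f + sint P N S g"
  using set_integral_add(2)[OF assms(1,2)] set_integral_add(2)[OF assms(3,4)]
  by (simp add: sint_def)

lemma sint_cmult: "sint P N S (\<lambda>x. c * f x) = c * sint P N S f"
  by (simp add: sint_def algebra_simps)

lemma sint_const:
  assumes "finite_borel_measure P" "finite_borel_measure N"
  shows "sint P N {a..b} (\<lambda>_. c) = c * smass a b P N"
  using assms
  by (simp add: sint_def smass_def set_integral_const finite_measure.emeasure_finite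
      finite_borel_measure.M_is_borel finite_borel_measure_def algebra_simps)

lemma sint_le_of_le_indicator:
  fixes F :: "real \<Rightarrow> real"
  assumes P: "finite_borel_measure P" and N: "finite_borel_measure N"
    and int: "set_integrable P S F" "set_integrable N S F" and T: "T \<in> sets borel" and K: "0 \<le> K"
    and bound: "\<And>x. x \<in> S \<Longrightarrow> 0 \<le> F x \<and> F x \<le> K * indicator T x"
  shows "sint P N S F \<le> K * measure P T"
proof -
  have "0 \<le> (LINT x:S|N. F x)"
    unfolding set_lebesgue_integral_def
    by (rule Bochner_Integration.integral_nonneg) (auto simp: indicator_def bound)
  moreover have "(LINT x:S|P. F x) \<le> (LINT x|P. K * indicator T x)"
    unfolding set_lebesgue_integral_def
  proof (rule integral_mono)
    show "integrable P (\<lambda>x. indicator S x *\<^sub>R F x)" using int(1) by (simp add: set_integrable_def)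
    show "integrable P (\<lambda>x. K * indicator T x)"
      using P T by (auto simp: finite_borel_measure.M_is_borel finite_borel_measure_def
          finite_measure.emeasure_finite less_top[symmetric])
    fix x
    show "indicator S x *\<^sub>R F x \<le> K * indicator T x"
      using bound[of x] K by (cases "x \<in> S") (auto simp: indicator_def)
  qed
  moreover have "(LINT x|P. K * indicator T x) = K * measure P T"
    using P T by (simp add: finite_borel_measure.M_is_borel sets_eq_imp_space_eq)
  ultimately show ?thesis unfolding sint_def by linarith
qed

section \<open>Jensen's inequality for Steffensen--Popoviciu measures\<close>

lemma SP_measure_finite_borel:
  assumes "SP_measure a b P N"
  shows "finite_borel_measure P" "finite_borel_measure N"
  using assms
  unfolding SP_measure_def signed_jordan_def finite_borel_measure_def finite_borel_measure_axioms_def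
  by auto

lemma SP_measure_sint_nonneg:
  assumes "SP_measure a b P N" "continuous_on {a..b} g" "convex_on {a..b} g"
    "\<And>x. x \<in> {a..b} \<Longrightarrow> 0 \<le> g x"
  shows "0 \<le> sint P N {a..b} g"
  using assms unfolding SP_measure_def by auto

lemma SP_measure_barycenter_le:
  assumes SP: "SP_measure a b P N"
  shows "barycenter a b P N \<le> b"
proof -
  note P = SP_measure_finite_borel(1)[OF SP] and N = SP_measure_finite_borel(2)[OF SP]
  have "0 \<le> sint P N {a..b} (\<lambda>x. b + (-1) * (x - 0))"
    by (rule SP_measure_sint_nonneg[OF SP _ convex_on_affine]) (auto intro!: continuous_intros)
  also have "sint P N {a..b} (\<lambda>x. b + (-1) * (x - 0)) = b * smass a b P N - sint P N {a..b} (\<lambda>x. x)"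
    using sint_diff[of P "{a..b}" "\<lambda>_. b" "\<lambda>x. x" N] sint_const[OF P N]
    by (simp add: finite_borel_measure.set_integrable_continuous_on_Icc[OF P]
        finite_borel_measure.set_integrable_continuous_on_Icc[OF N] continuous_on_id)
  finally show ?thesis
    using SP unfolding barycenter_def SP_measure_def by (simp add: divide_le_eq)
qed

lemma SP_measure_sint_sub_barycenter:
  assumes SP: "SP_measure a b P N"
  shows "sint P N {a..b} (\<lambda>x. x - barycenter a b P N) = 0"
proof -
  note P = SP_measure_finite_borel(1)[OF SP] and N = SP_measure_finite_borel(2)[OF SP]
  have "sint P N {a..b} (\<lambda>x. x - barycenter a b P N)
      = sint P N {a..b} (\<lambda>x. x) - barycenter a b P N * smass a b P N"
    using sint_diff[of P "{a..b}" "\<lambda>x. x" "\<lambda>_. barycenter a b P N" N] sint_const[OF P N]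
    by (simp add: finite_borel_measure.set_integrable_continuous_on_Icc[OF P]
        finite_borel_measure.set_integrable_continuous_on_Icc[OF N] continuous_on_id)
  then show ?thesis
    using SP unfolding barycenter_def SP_measure_def by simp
qed

text \<open>\<open>max g (secant g t b)\<close> is continuous and convex on \<open>[a, b]\<close> and differs from \<open>g\<close> only on
  \<open>(t, b)\<close>.\<close>

lemma SP_measure_sint_ge_secant_cutoff:
  fixes g :: "real \<Rightarrow> real"
  assumes SP: "SP_measure a b P N" and t: "a \<le> t" "t < b"
    and g: "convex_on {a..b} g" "continuous_on {a..<b} g" and nonneg: "\<And>x. x \<in> {a..b} \<Longrightarrow> 0 \<le> g x"
    and int: "set_integrable P {a..b} g" "set_integrable N {a..b} g"
  shows "- (max (g a) (g b) * measure P {t<..<b}) \<le> sint P N {a..b} g"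
proof -
  note P = SP_measure_finite_borel(1)[OF SP] and N = SP_measure_finite_borel(2)[OF SP]
  define K where "K = max (g a) (g b)"
  define \<psi> where "\<psi> x = max (g x) (secant g t b x)" for x
  have \<psi>_left: "\<psi> x = g x" if "x \<in> {a..t}" for x
    using convex_on_secant_le[OF g(1), of t b x] that t by (auto simp: \<psi>_def)
  have \<psi>_right: "\<psi> x = secant g t b x" if "x \<in> {t..b}" for x
    using convex_on_le_secant[OF g(1), of t b x] that t by (auto simp: \<psi>_def)
  have \<psi>_convex: "convex_on {a..b} \<psi>"
    unfolding \<psi>_def[abs_def] by (intro convex_on_max g convex_on_secant convex_real_interval)
  have "continuous_on {a..b} (\<lambda>x. if x \<le> t then g x else secant g t b x)"
  proof (rule continuous_on_cases_le)
    show "continuous_on {x \<in> {a..b}. x \<le> t} g" by (rule continuous_on_subset[OF g(2)]) (use t in auto)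
    show "continuous_on {x \<in> {a..b}. t \<le> x} (secant g t b)" by (rule continuous_on_secant)
  qed (use t in \<open>auto intro: continuous_intros\<close>)
  then have \<psi>_cont: "continuous_on {a..b} \<psi>"
    by (rule continuous_on_eq) (auto simp: \<psi>_left \<psi>_right)
  have \<psi>_int: "set_integrable P {a..b} \<psi>" "set_integrable N {a..b} \<psi>"
    using P N \<psi>_cont by (auto intro: finite_borel_measure.set_integrable_continuous_on_Icc)
  have "0 \<le> sint P N {a..b} \<psi>"
    by (rule SP_measure_sint_nonneg[OF SP \<psi>_cont \<psi>_convex]) (use nonneg in \<open>force simp: \<psi>_def\<close>)
  moreover have "sint P N {a..b} (\<lambda>x. \<psi> x - g x) \<le> K * measure P {t<..<b}"
  proof (rule sint_le_of_le_indicator[OF P N])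
    show "set_integrable P {a..b} (\<lambda>x. \<psi> x - g x)" "set_integrable N {a..b} (\<lambda>x. \<psi> x - g x)"
      using \<psi>_int int by auto
    show "0 \<le> K" using nonneg[of a] t by (simp add: K_def)
    fix x assume x: "x \<in> {a..b}"
    have "\<psi> x - g x \<le> K" if "x \<in> {t<..<b}"
    proof -
      have "secant g t b x \<le> max (g t) (g b)" using secant_le_max[of t b x g] that by simp
      also have "\<dots> \<le> K" using convex_on_le_max[OF g(1), of t] t by (simp add: K_def)
      finally show ?thesis using \<psi>_right[of x] nonneg[OF x] that by simp
    qed
    moreover have "\<psi> x = g x" if "x \<notin> {t<..<b}"
      using that x t \<psi>_left \<psi>_right[of b] by fastforce
    ultimately show "0 \<le> \<psi> x - g x \<and> \<psi> x - g x \<le> K * indicator {t<..<b} x"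
      by (auto simp: \<psi>_def indicator_def)
  qed simp
  moreover have "sint P N {a..b} (\<lambda>x. \<psi> x - g x) = sint P N {a..b} \<psi> - sint P N {a..b} g"
    by (rule sint_diff[OF \<psi>_int(1) int(1) \<psi>_int(2) int(2)])
  ultimately show ?thesis by (simp add: K_def)
qed

lemma SP_measure_sint_nonneg_convex_Ico:
  fixes g :: "real \<Rightarrow> real"
  assumes SP: "SP_measure a b P N" and "a < b"
    and "convex_on {a..b} g" "continuous_on {a..<b} g" "\<And>x. x \<in> {a..b} \<Longrightarrow> 0 \<le> g x"
    and "set_integrable P {a..b} g" "set_integrable N {a..b} g"
  shows "0 \<le> sint P N {a..b} g"
  using finite_borel_measure.nonneg_if_ge_neg_measure_left_intervals[OF SP_measure_finite_borel(1)[OF SP]]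
    SP_measure_sint_ge_secant_cutoff[OF SP _ _ assms(3-7)] \<open>a < b\<close>
  by blast

lemma convex_on_secant_minus_le_indicator:
  fixes \<phi> :: "real \<Rightarrow> real"
  assumes \<phi>: "convex_on {a..b} \<phi>" and bounds: "\<And>x. x \<in> {a..b} \<Longrightarrow> l \<le> \<phi> x \<and> \<phi> x \<le> u"
    and r: "a \<le> r" "r < m" "m \<le> b" and x: "x \<in> {a..b}"
  shows "0 \<le> max (secant \<phi> r m x - \<phi> x) 0 \<and> max (secant \<phi> r m x - \<phi> x) 0 \<le> (u - l) * indicator {r<..<m} x"
proof -
  have "0 \<le> u - l" using bounds[of a] r by auto
  moreover have "secant \<phi> r m x - \<phi> x \<le> u - l" if "x \<in> {r<..<m}"
    using secant_le_max[of r m x \<phi>] bounds[OF x] bounds[of r] bounds[of m] r that by auto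
  moreover have "secant \<phi> r m x \<le> \<phi> x" if "x \<notin> {r<..<m}"
    using convex_on_secant_le[OF \<phi>, of r m x] that x r by auto
  ultimately show ?thesis by (auto simp: indicator_def)
qed

lemma sint_secant:
  assumes P: "finite_borel_measure P" and N: "finite_borel_measure N"
    and bary: "sint P N {a..b} (\<lambda>x. x - m) = 0"
  shows "sint P N {a..b} (secant \<phi> r m) = \<phi> m * smass a b P N"
proof -
  define s where "s = (\<phi> m - \<phi> r) / (m - r)"
  have "secant \<phi> r m = (\<lambda>x. \<phi> m + s * (x - m))" by (simp add: fun_eq_iff secant_def s_def)
  moreover have "sint P N {a..b} (\<lambda>x. \<phi> m + s * (x - m))
      = sint P N {a..b} (\<lambda>_. \<phi> m) + sint P N {a..b} (\<lambda>x. s * (x - m))"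
    by (rule sint_add)
      (use P N in \<open>auto intro!: finite_borel_measure.set_integrable_continuous_on_Icc continuous_intros\<close>)
  ultimately show ?thesis using bary by (simp add: sint_const[OF P N] sint_cmult)
qed

lemma SP_measure_jensen_cutoff:
  fixes \<phi> :: "real \<Rightarrow> real"
  assumes SP: "SP_measure a b P N"
    and \<phi>: "convex_on {a..b} \<phi>" "continuous_on {a..<b} \<phi>"
    and int: "set_integrable P {a..b} \<phi>" "set_integrable N {a..b} \<phi>"
    and bounds: "\<And>x. x \<in> {a..b} \<Longrightarrow> l \<le> \<phi> x \<and> \<phi> x \<le> u"
    and r: "a \<le> r" "r < m" "m \<le> b"
    and bary: "sint P N {a..b} (\<lambda>x. x - m) = 0"
  shows "- ((u - l) * measure P {r<..<m}) \<le> sint P N {a..b} \<phi> - \<phi> m * smass a b P N"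
proof -
  note P = SP_measure_finite_borel(1)[OF SP] and N = SP_measure_finite_borel(2)[OF SP]
  define L where "L = secant \<phi> r m"
  define \<beta>\<^sub>p where "\<beta>\<^sub>p x = max (\<phi> x - L x) 0" for x
  define \<beta>\<^sub>n where "\<beta>\<^sub>n x = max (L x - \<phi> x) 0" for x
  have L_int: "set_integrable Q {a..b} L" if "finite_borel_measure Q" for Q
    unfolding L_def by (intro finite_borel_measure.set_integrable_continuous_on_Icc[OF that] continuous_on_secant)
  have zero: "set_integrable Q {a..b} (\<lambda>_. 0::real)" for Q by (simp add: set_integrable_def)
  have \<beta>\<^sub>p_int: "set_integrable P {a..b} \<beta>\<^sub>p" "set_integrable N {a..b} \<beta>\<^sub>p"
    unfolding \<beta>\<^sub>p_def[abs_def] using int L_int[OF P] L_int[OF N] by (auto intro!: set_integrable_max zero)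
  have \<beta>\<^sub>n_int: "set_integrable P {a..b} \<beta>\<^sub>n" "set_integrable N {a..b} \<beta>\<^sub>n"
    unfolding \<beta>\<^sub>n_def[abs_def] using int L_int[OF P] L_int[OF N] by (auto intro!: set_integrable_max zero)
  have "0 \<le> sint P N {a..b} \<beta>\<^sub>p"
  proof (rule SP_measure_sint_nonneg_convex_Ico[OF SP _ _ _ _ \<beta>\<^sub>p_int])
    have "convex_on {a..b} (\<lambda>x. \<phi> x + (- \<phi> m + (- ((\<phi> m - \<phi> r) / (m - r))) * (x - m)))"
      by (intro convex_on_add \<phi>(1) convex_on_affine) simp
    moreover have "(\<lambda>x. \<phi> x + (- \<phi> m + (- ((\<phi> m - \<phi> r) / (m - r))) * (x - m))) = (\<lambda>x. \<phi> x - L x)"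
      by (simp add: fun_eq_iff L_def secant_def)
    ultimately have "convex_on {a..b} (\<lambda>x. \<phi> x - L x)" by simp
    then show "convex_on {a..b} \<beta>\<^sub>p"
      unfolding \<beta>\<^sub>p_def[abs_def] by (intro convex_on_max) (simp_all add: convex_on_const)
    show "continuous_on {a..<b} \<beta>\<^sub>p"
      unfolding \<beta>\<^sub>p_def L_def by (intro continuous_intros \<phi>(2) continuous_on_secant)
  qed (use r in \<open>auto simp: \<beta>\<^sub>p_def\<close>)
  moreover have "sint P N {a..b} \<beta>\<^sub>n \<le> (u - l) * measure P {r<..<m}"
    by (rule sint_le_of_le_indicator[OF P N \<beta>\<^sub>n_int])
      (use convex_on_secant_minus_le_indicator[OF \<phi>(1) bounds r] bounds[of a] r
        in \<open>auto simp: \<beta>\<^sub>n_def L_def\<close>)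
  moreover have "sint P N {a..b} (\<lambda>x. \<phi> x - L x) = sint P N {a..b} \<beta>\<^sub>p - sint P N {a..b} \<beta>\<^sub>n"
  proof -
    have "(\<lambda>x. \<phi> x - L x) = (\<lambda>x. \<beta>\<^sub>p x - \<beta>\<^sub>n x)" by (auto simp: \<beta>\<^sub>p_def \<beta>\<^sub>n_def)
    then show ?thesis using sint_diff[OF \<beta>\<^sub>p_int(1) \<beta>\<^sub>n_int(1) \<beta>\<^sub>p_int(2) \<beta>\<^sub>n_int(2)] by simp
  qed
  moreover have "sint P N {a..b} (\<lambda>x. \<phi> x - L x) = sint P N {a..b} \<phi> - \<phi> m * smass a b P N"
    using sint_diff[OF int(1) L_int[OF P] int(2) L_int[OF N]] sint_secant[OF P N bary]
    by (simp add: L_def)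
  ultimately show ?thesis by linarith
qed

theorem SP_measure_jensen:
  fixes \<phi> :: "real \<Rightarrow> real"
  assumes SP: "SP_measure a b P N"
    and \<phi>: "convex_on {a..b} \<phi>" "continuous_on {a..<b} \<phi>"
    and int: "set_integrable P {a..b} \<phi>" "set_integrable N {a..b} \<phi>"
    and m: "a < barycenter a b P N"
  shows "\<phi> (barycenter a b P N) * smass a b P N \<le> sint P N {a..b} \<phi>"
proof -
  define u where "u = max (\<phi> a) (\<phi> b)"
  define l where "l = 2 * \<phi> ((a + b) / 2) - u"
  have bounds: "l \<le> \<phi> x \<and> \<phi> x \<le> u" if "x \<in> {a..b}" for x
    using convex_on_Icc_lower_bound[OF \<phi>(1) that] convex_on_le_max[OF \<phi>(1) that]
    by (simp add: u_def l_def)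
  have "0 \<le> sint P N {a..b} \<phi> - \<phi> (barycenter a b P N) * smass a b P N"
    using SP_measure_jensen_cutoff[OF SP \<phi> int bounds _ _ SP_measure_barycenter_le[OF SP]
        SP_measure_sint_sub_barycenter[OF SP]]
    by (intro finite_borel_measure.nonneg_if_ge_neg_measure_left_intervals[OF
          SP_measure_finite_borel(1)[OF SP] m])
  then show ?thesis by simp
qed

section \<open>Left almost convex functions\<close>

definition chord_prolongation :: "(real \<Rightarrow> real) \<Rightarrow> real \<Rightarrow> real \<Rightarrow> real \<Rightarrow> real" where
  "chord_prolongation f c d x = (if x \<le> d then secant f c d x else f x)"

lemma convex_on_chord_prolongation:
  assumes f: "convex_on {c..b} f" and cd: "c < d" "d \<le> b"
  shows "convex_on {a..b} (chord_prolongation f c d)"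
  unfolding chord_prolongation_def[abs_def] secant_def
proof (rule convex_on_prolong_by_support_line)
  show "convex_on {d..b} f" by (rule convex_on_subset[OF f]) (use cd in auto)
  show "f d + (f d - f c) / (d - c) * (x - d) \<le> f x" if "x \<in> {d..b}" for x
    using convex_on_secant_le[OF f, of c d x] that cd by (auto simp: secant_def)
qed

lemma le_chord_prolongation:
  assumes f: "convex_on {c..b} f" and cd: "c < d" "d \<le> b" and x: "x \<in> {c..b}"
  shows "f x \<le> chord_prolongation f c d x"
  using convex_on_le_secant[OF f, of c d x] cd x by (simp add: chord_prolongation_def)

lemma continuous_on_chord_prolongation:
  assumes f: "convex_on {c..b} f" and cd: "c < d" "d < b"
  shows "continuous_on {a..<b} (chord_prolongation f c d)"
  unfolding chord_prolongation_def[abs_def]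
proof (rule continuous_on_cases_le)
  have "continuous_on {c<..<b} f"
    by (rule convex_on_continuous[OF open_greaterThanLessThan convex_on_subset[OF f]]) auto
  then show "continuous_on {x \<in> {a..<b}. d \<le> x} f"
    by (rule continuous_on_subset) (use cd in auto)
qed (use cd in \<open>auto intro: continuous_on_secant continuous_intros\<close>)

lemma (in finite_borel_measure) set_integrable_chord_prolongation:
  assumes f: "set_integrable M {a..b} f" and d: "a \<le> d" "d \<le> b"
  shows "set_integrable M {a..b} (chord_prolongation f c d)"
proof -
  have "set_integrable M {a..d} (chord_prolongation f c d) \<longleftrightarrow> set_integrable M {a..d} (secant f c d)"
    by (rule set_integrable_cong) (auto simp: chord_prolongation_def)
  moreover have "set_integrable M {a..d} (secant f c d)"
    by (intro set_integrable_continuous_on_Icc continuous_on_secant)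
  moreover have "set_integrable M {d<..b} (chord_prolongation f c d) \<longleftrightarrow> set_integrable M {d<..b} f"
    by (rule set_integrable_cong) (auto simp: chord_prolongation_def)
  moreover have "set_integrable M {d<..b} f"
    by (rule set_integrable_subset[OF f]) (use d in auto)
  ultimately have "set_integrable M ({a..d} \<union> {d<..b}) (chord_prolongation f c d)"
    by (intro set_integrable_Un) auto
  moreover have "{a..d} \<union> {d<..b} = {a..b}" using d by auto
  ultimately show ?thesis by simp
qed

lemma (in finite_borel_measure) set_integral_diff_chord_prolongation:
  assumes f: "set_integrable M {a..b} f" and cd: "c < d" and d: "a \<le> d" "d \<le> b"
  shows "(d - c) * ((LINT x:{a..b}|M. f x) - (LINT x:{a..b}|M. chord_prolongation f c d x))
    = (LINT x:{a..d}|M. (f x - f c) * (d - c) - (f d - f c) * (x - c))"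
proof -
  define h where "h = secant f c d"
  have split: "(LINT x:{a..b}|M. F x) = (LINT x:{a..d}|M. F x) + (LINT x:{d<..b}|M. F x)"
    if "set_integrable M {a..b} F" for F :: "real \<Rightarrow> real"
  proof -
    have U: "{a..b} = {a..d} \<union> {d<..b}" using d by auto
    have "set_integrable M {a..d} F" "set_integrable M {d<..b} F"
      using d by (auto intro!: set_integrable_subset[OF that])
    then show ?thesis unfolding U by (intro set_integral_Un) auto
  qed
  have f_ad: "set_integrable M {a..d} f" using d by (auto intro!: set_integrable_subset[OF f])
  have h_ad: "set_integrable M {a..d} h"
    unfolding h_def by (intro set_integrable_continuous_on_Icc continuous_on_secant)
  have "(LINT x:{a..d}|M. chord_prolongation f c d x) = (LINT x:{a..d}|M. h x)"
    by (rule set_lebesgue_integral_cong) (auto simp: chord_prolongation_def h_def)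
  moreover have "(LINT x:{d<..b}|M. chord_prolongation f c d x) = (LINT x:{d<..b}|M. f x)"
    by (rule set_lebesgue_integral_cong) (auto simp: chord_prolongation_def)
  ultimately have "(LINT x:{a..b}|M. f x) - (LINT x:{a..b}|M. chord_prolongation f c d x)
      = (LINT x:{a..d}|M. f x - h x)"
    using split[OF f] split[OF set_integrable_chord_prolongation[OF f d]]
      set_integral_diff(2)[OF f_ad h_ad] by simp
  moreover have "(d - c) * (f x - h x) = (f x - f c) * (d - c) - (f d - f c) * (x - c)" for x
    using cd by (simp add: h_def secant_def field_simps)
  ultimately show ?thesis by (simp flip: set_integral_mult_right)
qed

lemma sint_diff_chord_prolongation:
  assumes P: "finite_borel_measure P" and N: "finite_borel_measure N"
    and f: "set_integrable P {a..b} f" "set_integrable N {a..b} f" and cd: "c < d" and d: "a \<le> d" "d \<le> b"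
  shows "(d - c) * (sint P N {a..b} f - sint P N {a..b} (chord_prolongation f c d))
    = sint P N {a..d} (\<lambda>x. (f x - f c) * (d - c) - (f d - f c) * (x - c))"
  using finite_borel_measure.set_integral_diff_chord_prolongation[OF P f(1) cd d]
    finite_borel_measure.set_integral_diff_chord_prolongation[OF N f(2) cd d]
  by (simp add: sint_def algebra_simps)

theorem theorem3:
  fixes a b c d :: real and P N :: "real measure" and f :: "real \<Rightarrow> real"
  assumes "a < b"
    and "SP_measure a b P N"
    and "left_almost_convex a b P N f c d"
    and "barycenter a b P N \<ge> c"
    and "sint P N {a..d} (\<lambda>x. (f x - f c) * (d - c) - (f d - f c) * (x - c)) \<ge> 0"
  shows "f (barycenter a b P N) \<le> sint P N {a..b} f / smass a b P N"
proof -
  note SP = assms(2) and P = SP_measure_finite_borel(1)[OF assms(2)]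
    and N = SP_measure_finite_borel(2)[OF assms(2)]
  obtain int: "set_integrable P {a..b} f" "set_integrable N {a..b} f"
    and cd: "a < c" "c < d" "d < b" and f: "convex_on {c..b} f"
    using assms(3) unfolding left_almost_convex_def by auto
  define m where "m = barycenter a b P N"
  define \<phi> where "\<phi> = chord_prolongation f c d"
  have m: "c \<le> m" "m \<le> b" using assms(4) SP_measure_barycenter_le[OF SP] by (simp_all add: m_def)
  have M: "0 < smass a b P N" using SP unfolding SP_measure_def by simp
  have "f m \<le> \<phi> m" unfolding \<phi>_def by (rule le_chord_prolongation[OF f]) (use cd m in auto)
  then have "f m * smass a b P N \<le> \<phi> m * smass a b P N" using M by simp
  also have "\<dots> \<le> sint P N {a..b} \<phi>"
    unfolding \<phi>_def m_def
    by (rule SP_measure_jensen[OF SP convex_on_chord_prolongation[OF f]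
          continuous_on_chord_prolongation[OF f]
          finite_borel_measure.set_integrable_chord_prolongation[OF P int(1)]
          finite_borel_measure.set_integrable_chord_prolongation[OF N int(2)]])
      (use cd m assms(4) in auto)
  also have "\<dots> \<le> sint P N {a..b} f"
  proof -
    have "0 \<le> (d - c) * (sint P N {a..b} f - sint P N {a..b} \<phi>)"
      using sint_diff_chord_prolongation[OF P N int, of c d] assms(5) cd by (simp add: \<phi>_def)
    then show ?thesis using cd by (simp add: zero_le_mult_iff)
  qed
  finally show ?thesis using M by (simp add: m_def le_divide_eq)
qed

end
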